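(* Let $L\ge1$ and widths $N_1,\dots,N_{L-1}$ with $\min\{N_l:l=1,\dots,L-1\}\ge D$. Then the union over $N_L\in\mathbb{N}_{>0}$ of the sets of sampled ReLU networks $\Phi\colon\mathcal{X}\to\mathbb{R}^{N_{L+1}}$ with $L$ hidden layers of widths $[N_1,\dots,N_{L-1},N_L]$ is dense in $C(\mathcal{X},\mathbb{R}^{N_{L+1}})$ with respect to the uniform norm.
   Context: Input space: Fix $D\ge1$, Euclidean norm and inner product on $\mathbb{R}^D$. For $A\subseteq\mathbb{R}^D$ let $d(z,A)=\inf_{a\in A}\|z-a\|$, $\mathrm{Med}(A)=\{z:\exists p\neq q\in A,\ \|p-z\|=\|q-z\|=d(z,A)\}$, reach $\tau_A=\inf_{a\in A}d(a,\mathrm{Med}(A))$. Let $\mathcal{X}'\subset\mathbb{R}^D$ be nonempty compact with $\tau_{\mathcal{X}'}>0$, fix $0<\epsilon_I<\min\{\tau_{\mathcal{X}'},1\}$, and $\mathcal{X}=\{x:d(x,\mathcal{X}')\le\epsilon_I\}$. Networks: with $\phi(t)=\max\{t,0\}$, $N_0=D$, a network computes $\Phi^{(0)}(x)=x$, $\Phi^{(l)}(x)=\phi(W_l\Phi^{(l-1)}(x)-b_l)$ for $l=1,\dots,L$, $\Phi(x)=W_{L+1}\Phi^{(L)}(x)-b_{L+1}$; $w_{l,i},b_{l,i}$ denote the $i$-th row of $W_l$ and entry of $b_l$. It is a sampled network if for all $l\le L$, $i\le N_l$ there are $x^{(1)}_{0,i},x^{(2)}_{0,i}\in\mathcal{X}$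 such that $x^{(j)}_{l-1,i}=\Phi^{(l-1)}(x^{(j)}_{0,i})$ are distinct and $w_{l,i}=\frac{x^{(2)}_{l-1,i}-x^{(1)}_{l-1,i}}{\|x^{(2)}_{l-1,i}-x^{(1)}_{l-1,i}\|^2}$, $b_{l,i}=\langle w_{l,i},x^{(1)}_{l-1,i}\rangle$; $W_{L+1},b_{L+1}$ are unrestricted. *)

theory Defs
  imports "HOL-Analysis.Analysis" "HOL-Library.Extended_Real"
begin

definition medial_axis :: "'a::euclidean_space set \<Rightarrow> 'a set" where
  "medial_axis A = {z. \<exists>p\<in>A. \<exists>q\<in>A. p \<noteq> q \<and>
      norm (p - z) = infdist z A \<and> norm (q - z) = infdist z A}"

definition reach :: "'a::euclidean_space set \<Rightarrow> ereal" where
  "reach A = (INF a\<in>A. if medial_axis A = {} then \<infinity> else ereal (infdist a (medial_axis A)))"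

text \<open>A fixed enumeration of the orthonormal basis, identifying the input space with R^D.\<close>
definition basis_enum :: "'a::euclidean_space list" where
  "basis_enum = (SOME bs. distinct bs \<and> set bs = Basis)"

definition coords :: "'a::euclidean_space \<Rightarrow> nat \<Rightarrow> real" where
  "coords x = (\<lambda>j. if j < DIM('a) then x \<bullet> (basis_enum ! j) else 0)"

definition relu :: "real \<Rightarrow> real" where
  "relu t = max t 0"

text \<open>Vectors of R^n are functions nat => real; only indices below n matter.\<close>
definition vinner :: "nat \<Rightarrow> (nat \<Rightarrow> real) \<Rightarrow> (nat \<Rightarrow> real) \<Rightarrow> real" where
  "vinner n u v = (\<Sum>j<n. u j * v j)"

definition vnorm :: "nat \<Rightarrow> (nat \<Rightarrow> real) \<Rightarrow> real" where
  "vnorm n u = sqrt (vinner n u u)"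

text \<open>Hidden layers: N l is the width of layer l (N 0 must be the input dimension),
  W l i is the i-th row of W_l, b l i the i-th entry of b_l.
  layer N W b l x = Phi^(l)(x); entries with index >= N l are set to 0.\<close>
fun layer :: "(nat \<Rightarrow> nat) \<Rightarrow> (nat \<Rightarrow> nat \<Rightarrow> nat \<Rightarrow> real) \<Rightarrow> (nat \<Rightarrow> nat \<Rightarrow> real)
    \<Rightarrow> nat \<Rightarrow> 'a::euclidean_space \<Rightarrow> nat \<Rightarrow> real" where
  "layer N W b 0 x = coords x"
| "layer N W b (Suc l) x = (\<lambda>i. if i < N (Suc l)
      then relu (vinner (N l) (W (Suc l) i) (layer N W b l x) - b (Suc l) i) else 0)"

text \<open>Network output with unrestricted last (affine) layer: W_{L+1} has columns c i, bias b0.\<close>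
definition net_out :: "(nat \<Rightarrow> nat) \<Rightarrow> (nat \<Rightarrow> nat \<Rightarrow> nat \<Rightarrow> real) \<Rightarrow> (nat \<Rightarrow> nat \<Rightarrow> real)
    \<Rightarrow> nat \<Rightarrow> (nat \<Rightarrow> 'b::real_vector) \<Rightarrow> 'b \<Rightarrow> 'a::euclidean_space \<Rightarrow> 'b" where
  "net_out N W b L c b0 x = (\<Sum>i<N L. layer N W b L x i *\<^sub>R c i) - b0"

definition is_sampled :: "'a::euclidean_space set \<Rightarrow> nat \<Rightarrow> (nat \<Rightarrow> nat)
    \<Rightarrow> (nat \<Rightarrow> nat \<Rightarrow> nat \<Rightarrow> real) \<Rightarrow> (nat \<Rightarrow> nat \<Rightarrow> real) \<Rightarrow> bool" where
  "is_sampled X L N W b \<longleftrightarrow>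
     (\<forall>l\<in>{1..L}. \<forall>i<N l. \<exists>x1\<in>X. \<exists>x2\<in>X.
        layer N W b (l - 1) x1 \<noteq> layer N W b (l - 1) x2 \<and>
        W l i = (\<lambda>j. (layer N W b (l - 1) x2 j - layer N W b (l - 1) x1 j) /
                   (vnorm (N (l - 1)) (\<lambda>k. layer N W b (l - 1) x2 k - layer N W b (l - 1) x1 k))\<^sup>2) \<and>
        b l i = vinner (N (l - 1)) (W l i) (layer N W b (l - 1) x1))"

end

(*
  The first L - 1 hidden layers are sampled at the pairs (lo i, lo i + eI e_i), where lo i lies
  eI below the lowest point of X' in coordinate i.  On the thickening X every such neuron computes
  the shifted coordinate (x - lo i)_i / eI, so these layers pass an injective affine image of the
  input forward.  A last-layer neuron sampled at (x1, x2) therefore computes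
  relu (B (x2 - x1) (x - x1)) / B (x2 - x1) (x2 - x1) for a positive definite bilinear form B.
  Such neurons approximate every ridge function g (B v x): the piecewise linear interpolant of g
  with knots B v x1, x1 in the interior of X, is a sum of them, and these knots are dense because
  X is the closure of its interior.  Sums of exponential ridge functions exp (B v x) are dense in
  C(X) by Stone-Weierstrass, hence so are the networks, coordinate by coordinate.
*)
theory Submission
  imports Defs
begin

section \<open>ReLU sums on the line\<close>

lemma relu_eq_0: "t \<le> 0 \<Longrightarrow> relu t = 0"
  by (simp add: relu_def)

lemma relu_eq_self: "0 \<le> t \<Longrightarrow> relu t = t"
  by (simp add: relu_def)

lemma relu_mult_pos: "0 < c \<Longrightarrow> relu (c * t) = c * relu t"
  by (auto simp: relu_def max_def mult_le_0_iff zero_le_mult_iff)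

lemma relu_divide_nonneg: "0 \<le> c \<Longrightarrow> relu (t / c) = relu t / c"
  by (cases "c = 0") (auto simp: relu_def max_def divide_le_0_iff)

definition relu_sum :: "real \<Rightarrow> (real \<times> real) list \<Rightarrow> real \<Rightarrow> real" where
  "relu_sum c ps t = c + (\<Sum>(a, s)\<leftarrow>ps. a * relu (t - s))"

definition pl_interpolant :: "(real \<Rightarrow> real) \<Rightarrow> real set \<Rightarrow> (real \<Rightarrow> real) \<Rightarrow> bool" where
  "pl_interpolant g S p \<longleftrightarrow>
     (\<forall>t\<le>Min S. p t = g (Min S)) \<and> (\<forall>t\<ge>Max S. p t = g (Max S)) \<and>
     (\<forall>t. Min S \<le> t \<and> t \<le> Max S \<longrightarrow> (\<exists>u\<in>S. \<exists>w\<in>S. u \<le> t \<and> t \<le> w \<and> (\<forall>z\<in>S. z \<le> u \<or> w \<le> z) \<and>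
            p t = g u + (g w - g u) * ((t - u) / (w - u))))"

lemma pl_interpolant_insert_greater:
  assumes A: "finite A" "A \<noteq> {}" "\<forall>a\<in>A. a < b" and p: "pl_interpolant g A p"
  defines "m \<equiv> Max A"
  defines "k \<equiv> (g b - g m) / (b - m)"
  shows "pl_interpolant g (insert b A) (\<lambda>t. p t + k * relu (t - m) - k * relu (t - b))"
    (is "pl_interpolant g _ ?p")
proof -
  have m: "m \<in> A" "m < b" "\<And>z. z \<in> A \<Longrightarrow> z \<le> m" "Min A \<le> m"
    using A by (auto simp: m_def)
  have Min_ins: "Min (insert b A) = Min A" and Max_ins: "Max (insert b A) = b"
    using A m by (simp_all add: m_def)
  have past_m: "p t = g m" if "m \<le> t" for t
    using p that unfolding pl_interpolant_def m_def by simp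
  have below_m: "?p t = p t" if "t \<le> m" for t
    using that m by (simp add: relu_eq_0)
  have above_m: "?p t = g m + (g b - g m) * ((t - m) / (b - m))" if "m \<le> t" "t \<le> b" for t
    using that m past_m[of t] by (simp add: k_def relu_eq_0 relu_eq_self)
  show ?thesis
    unfolding pl_interpolant_def Min_ins Max_ins
  proof (intro conjI allI impI)
    fix t assume "t \<le> Min A"
    then show "?p t = g (Min A)" using p m below_m[of t] unfolding pl_interpolant_def by simp
  next
    fix t assume "b \<le> t"
    then have "?p t = g m + k * (b - m)"
      using past_m[of t] m by (simp add: relu_eq_self algebra_simps)
    also have "\<dots> = g b" using m by (simp add: k_def)
    finally show "?p t = g b" .
  next
    fix t assume t: "Min A \<le> t \<and> t \<le> b"
    show "\<exists>u\<in>insert b A. \<exists>w\<in>insert b A. u \<le> t \<and> t \<le> w \<and> (\<forall>z\<in>insert b A. z \<le> u \<or> w \<le> z) \<and>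
        ?p t = g u + (g w - g u) * ((t - u) / (w - u))"
    proof (cases "t \<le> m")
      case True
      then obtain u w where uw: "u \<in> A" "w \<in> A" "u \<le> t" "t \<le> w" "\<forall>z\<in>A. z \<le> u \<or> w \<le> z"
          "p t = g u + (g w - g u) * ((t - u) / (w - u))"
        using p t unfolding pl_interpolant_def m_def by blast
      moreover have "w \<le> b" using uw(2) A(3) by auto
      ultimately show ?thesis using below_m[OF True] by (intro bexI[of _ u] bexI[of _ w]) auto
    next
      case False
      then show ?thesis using t m above_m[of t] by (intro bexI[of _ m] bexI[of _ b]) auto
    qed
  qed
qed

lemma relu_sum_interpolant_exists:
  assumes "finite S" "S \<noteq> {}"
  shows "\<exists>c ps. snd ` set ps \<subseteq> S \<and> pl_interpolant g S (relu_sum c ps)"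
  using assms
proof (induction S rule: finite_linorder_max_induct)
  case empty
  then show ?case by simp
next
  case (insert b A)
  show ?case
  proof (cases "A = {}")
    case True
    have "pl_interpolant g {b} (relu_sum (g b) [])"
      unfolding pl_interpolant_def relu_sum_def by auto
    then show ?thesis using True by force
  next
    case False
    then obtain c ps where ps: "snd ` set ps \<subseteq> A" and p: "pl_interpolant g A (relu_sum c ps)"
      using insert by blast
    define k where "k = (g b - g (Max A)) / (b - Max A)"
    define ps' where "ps' = ps @ [(k, Max A), (-k, b)]"
    have "relu_sum c ps' = (\<lambda>t. relu_sum c ps t + k * relu (t - Max A) - k * relu (t - b))"
      by (simp add: ps'_def relu_sum_def fun_eq_iff)
    then have "pl_interpolant g (insert b A) (relu_sum c ps')"
      using pl_interpolant_insert_greater[OF insert.hyps(1) False insert.hyps(2) p] by (simp add: k_def)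
    moreover have "snd ` set ps' \<subseteq> insert b A"
      using ps False insert.hyps(1) by (auto simp: ps'_def)
    ultimately show ?thesis by blast
  qed
qed

lemma abs_diff_convex_combination_le:
  fixes y a b r :: real
  assumes "0 \<le> r" "r \<le> 1"
  shows "\<bar>y - (a + (b - a) * r)\<bar> \<le> (1 - r) * \<bar>y - a\<bar> + r * \<bar>y - b\<bar>"
proof -
  have "y - (a + (b - a) * r) = (1 - r) * (y - a) + r * (y - b)"
    by (simp add: algebra_simps)
  also have "\<bar>\<dots>\<bar> \<le> \<bar>(1 - r) * (y - a)\<bar> + \<bar>r * (y - b)\<bar>"
    by (rule abs_triangle_ineq)
  also have "\<dots> = (1 - r) * \<bar>y - a\<bar> + r * \<bar>y - b\<bar>"
    using assms by (simp add: abs_mult)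
  finally show ?thesis .
qed

lemma weighted_oscillation_le:
  fixes g :: "real \<Rightarrow> real"
  assumes g_uc: "\<And>x y. x \<in> K \<Longrightarrow> y \<in> K \<Longrightarrow> \<bar>x - y\<bar> < d \<Longrightarrow> \<bar>g x - g y\<bar> < e / 4"
    and g_bd: "\<And>x. x \<in> K \<Longrightarrow> \<bar>g x\<bar> \<le> M" and \<eta>: "2 * M * \<eta> \<le> d * e / 4" and d: "0 < d"
    and t: "t \<in> K" and v: "v \<in> K" and q: "0 \<le> q" "q \<le> 1" "\<bar>t - v\<bar> < d \<or> q * d \<le> \<eta>"
  shows "q * \<bar>g t - g v\<bar> \<le> e / 4"
proof (cases "\<bar>t - v\<bar> < d")
  case True
  then have "q * \<bar>g t - g v\<bar> \<le> 1 * (e / 4)"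
    using g_uc[OF t v] q by (intro mult_mono) auto
  then show ?thesis by simp
next
  case False
  have "\<bar>g t - g v\<bar> \<le> 2 * M" using g_bd[OF t] g_bd[OF v] by linarith
  moreover have "0 \<le> q * d" using q d by simp
  ultimately have "(q * d) * \<bar>g t - g v\<bar> \<le> \<eta> * (2 * M)"
    using False q by (intro mult_mono) auto
  then have "(q * \<bar>g t - g v\<bar>) * d \<le> e / 4 * d" using \<eta> by (simp add: algebra_simps)
  then show ?thesis using d by simp
qed

lemma interpolant_error:
  fixes g p :: "real \<Rightarrow> real"
  assumes p: "pl_interpolant g S p" and S: "finite S" "S \<subseteq> K"
    and t: "t \<in> K" and s: "s \<in> S" "\<bar>s - t\<bar> < \<eta>"
    and g_uc: "\<And>x y. x \<in> K \<Longrightarrow> y \<in> K \<Longrightarrow> \<bar>x - y\<bar> < d \<Longrightarrow> \<bar>g x - g y\<bar> < e / 4"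
    and g_bd: "\<And>x. x \<in> K \<Longrightarrow> \<bar>g x\<bar> \<le> M"
    and \<eta>: "\<eta> \<le> d" "2 * M * \<eta> \<le> d * e / 4" and d: "0 < d" and e: "0 < e"
  shows "\<bar>g t - p t\<bar> < e"
proof -
  have S_ne: "S \<noteq> {}" using s by auto
  have "Min S \<in> S" "Max S \<in> S"
    using S(1) S_ne by simp_all
  then have Min_Max: "Min S \<in> K" "Max S \<in> K" "Min S \<le> s" "s \<le> Max S"
    using S s by auto
  consider "t \<le> Min S" | "Max S \<le> t" | "Min S \<le> t" "t \<le> Max S" by linarith
  then show ?thesis
  proof cases
    case 1
    then show ?thesis
      using p g_uc[OF t Min_Max(1)] Min_Max(3) s(2) \<eta>(1) e unfolding pl_interpolant_def by auto
  next
    case 2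
    then show ?thesis
      using p g_uc[OF t Min_Max(2)] Min_Max(4) s(2) \<eta>(1) e unfolding pl_interpolant_def by auto
  next
    case 3
    then obtain u w where uw: "u \<in> S" "w \<in> S" "u \<le> t" "t \<le> w" "\<forall>z\<in>S. z \<le> u \<or> w \<le> z"
        and pt: "p t = g u + (g w - g u) * ((t - u) / (w - u))"
      using p unfolding pl_interpolant_def by blast
    define r where "r = (t - u) / (w - u)"
    have r: "0 \<le> r" "r \<le> 1" using uw unfolding r_def by (auto simp: divide_simps)
    have uwK: "u \<in> K" "w \<in> K" using uw S by auto
    \<comment> \<open>The net point s lies outside the open gap (u, w), so t is close to one of its ends.\<close>
    have near: "t - u < \<eta> \<or> w - t < \<eta>" using uw(5) s by fastforce
    have "\<bar>g t - p t\<bar> \<le> (1 - r) * \<bar>g t - g u\<bar> + r * \<bar>g t - g w\<bar>"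
      unfolding pt r_def[symmetric] using r by (rule abs_diff_convex_combination_le)
    also have "(1 - r) * \<bar>g t - g u\<bar> \<le> e / 4"
    proof (rule weighted_oscillation_le[OF g_uc g_bd \<eta>(2) d t uwK(1)])
      have "d \<le> t - u \<Longrightarrow> (1 - r) * d \<le> (1 - r) * (w - u)" using r uw by (intro mult_left_mono) auto
      moreover have "d \<le> t - u \<Longrightarrow> (1 - r) * (w - u) = w - t"
        using d uw(4) by (simp add: r_def field_simps)
      ultimately show "\<bar>t - u\<bar> < d \<or> (1 - r) * d \<le> \<eta>" using near \<eta>(1) uw(3) by force
    qed (use r in auto)
    also have "r * \<bar>g t - g w\<bar> \<le> e / 4"
    proof (rule weighted_oscillation_le[OF g_uc g_bd \<eta>(2) d t uwK(2)])
      have "d \<le> w - t \<Longrightarrow> r * d \<le> r * (w - u)" using r uw by (intro mult_left_mono) auto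
      moreover have "d \<le> w - t \<Longrightarrow> r * (w - u) = t - u" using d uw(3) by (simp add: r_def)
      ultimately show "\<bar>t - w\<bar> < d \<or> r * d \<le> \<eta>" using near \<eta>(1) uw(4) by force
    qed (use r in auto)
    finally show ?thesis using e by linarith
  qed
qed

lemma relu_sum_approx:
  fixes g :: "real \<Rightarrow> real"
  assumes K: "compact K" and TK: "T \<subseteq> K" "K \<subseteq> closure T"
    and g: "continuous_on K g" and e: "0 < e"
  shows "\<exists>c ps. snd ` set ps \<subseteq> T \<and> (\<forall>t\<in>K. \<bar>g t - relu_sum c ps t\<bar> < e)"
proof (cases "K = {}")
  case True
  then show ?thesis by (intro exI[of _ 0] exI[of _ "[]"]) auto
next
  case False
  obtain d where d: "0 < d" and g_uc: "\<And>x y. x \<in> K \<Longrightarrow> y \<in> K \<Longrightarrow> \<bar>x - y\<bar> < d \<Longrightarrow> \<bar>g x - g y\<bar> < e / 4"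
    using compact_uniformly_continuous[OF g K] e
    unfolding uniformly_continuous_on_def dist_real_def by (metis zero_less_divide_iff zero_less_numeral)
  obtain M where M: "0 < M" and g_bd: "\<And>x. x \<in> K \<Longrightarrow> \<bar>g x\<bar> \<le> M"
    using compact_imp_bounded[OF compact_continuous_image[OF g K]]
    unfolding bounded_pos by force
  define \<eta> where "\<eta> = min d (d * e / (8 * M))"
  have \<eta>: "0 < \<eta>" "\<eta> \<le> d" "2 * M * \<eta> \<le> d * e / 4"
    using d e M by (auto simp: \<eta>_def min_def field_simps)
  have "K \<subseteq> (\<Union>s\<in>T. ball s \<eta>)"
    using TK(2) \<eta>(1) by (force simp: closure_approachable dist_commute)
  then obtain S where S: "S \<subseteq> T" "finite S" "K \<subseteq> (\<Union>s\<in>S. ball s \<eta>)"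
    using compactE_image[OF K] by (metis open_ball)
  have "S \<noteq> {}" using S(3) False by auto
  then obtain c ps where ps: "snd ` set ps \<subseteq> S" and p: "pl_interpolant g S (relu_sum c ps)"
    using relu_sum_interpolant_exists[OF S(2)] by blast
  have "\<bar>g t - relu_sum c ps t\<bar> < e" if t: "t \<in> K" for t
  proof -
    obtain s where "s \<in> S" "\<bar>s - t\<bar> < \<eta>" using S(3) t by (auto simp: dist_real_def)
    then show ?thesis
      using interpolant_error[OF p S(2) _ t _ _ g_uc g_bd \<eta>(2,3) d e] S(1) TK(1) by blast
  qed
  then show ?thesis using ps S(1) by blast
qed

section \<open>Density of sampled neurons\<close>

locale sampling_domain =
  fixes X :: "'a::euclidean_space set" and B :: "'a \<Rightarrow> 'a \<Rightarrow> real"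
  assumes compact: "compact X"
    and regular_closed: "X \<subseteq> closure (interior X)"
    and bilinear: "bilinear B"
    and positive: "\<And>u. u \<noteq> 0 \<Longrightarrow> 0 < B u u"
begin

lemma bounded_bilinear_B: "bounded_bilinear B"
  using bilinear bilinear_conv_bounded_bilinear by blast

lemmas B_diff_right = bounded_bilinear.diff_right[OF bounded_bilinear_B]
  and B_scaleR_left = bounded_bilinear.scaleR_left[OF bounded_bilinear_B]
  and B_scaleR_right = bounded_bilinear.scaleR_right[OF bounded_bilinear_B]
  and B_add_left = bounded_bilinear.add_left[OF bounded_bilinear_B]
  and B_zero_left = bounded_bilinear.zero_left[OF bounded_bilinear_B]

lemma continuous_on_B: "continuous_on S (B v)"
  using bounded_bilinear.bounded_linear_right[OF bounded_bilinear_B]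
  by (intro linear_continuous_on) auto

definition sample_pairs :: "('a \<times> 'a) set" where
  "sample_pairs = {(x1, x2). x1 \<in> X \<and> x2 \<in> X \<and> x1 \<noteq> x2}"

text \<open>The sampled unit with weight w = (x2 - x1) / B(x2 - x1, x2 - x1) and bias B(w, x1),
  in the geometry of B (compare relu_sampled_unit below).\<close>
definition neuron :: "'a \<times> 'a \<Rightarrow> 'a \<Rightarrow> real" where
  "neuron p x = relu (B (snd p - fst p) (x - fst p)) / B (snd p - fst p) (snd p - fst p)"

definition neuron_sum :: "(('a \<times> 'a) \<times> 'b::real_vector) list \<Rightarrow> 'a \<Rightarrow> 'b" where
  "neuron_sum ps x = (\<Sum>(p, a)\<leftarrow>ps. neuron p x *\<^sub>R a)"

definition neuron_nets :: "('a \<Rightarrow> 'b::real_vector) set" where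
  "neuron_nets = {\<lambda>x. c + neuron_sum ps x | c ps. fst ` set ps \<subseteq> sample_pairs}"

lemma neuron_nets_const: "(\<lambda>x. c) \<in> neuron_nets"
  unfolding neuron_nets_def neuron_sum_def by (intro CollectI exI[of _ c] exI[of _ "[]"]) auto

lemma neuron_nets_neuron: "p \<in> sample_pairs \<Longrightarrow> (\<lambda>x. neuron p x *\<^sub>R a) \<in> neuron_nets"
  unfolding neuron_nets_def neuron_sum_def by (intro CollectI exI[of _ 0] exI[of _ "[(p, a)]"]) auto

lemma neuron_nets_add:
  assumes "Q1 \<in> neuron_nets" "Q2 \<in> neuron_nets"
  shows "(\<lambda>x. Q1 x + Q2 x) \<in> neuron_nets"
proof -
  obtain c1 ps1 c2 ps2 where "fst ` set ps1 \<subseteq> sample_pairs" "Q1 = (\<lambda>x. c1 + neuron_sum ps1 x)"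
    "fst ` set ps2 \<subseteq> sample_pairs" "Q2 = (\<lambda>x. c2 + neuron_sum ps2 x)"
    using assms unfolding neuron_nets_def by blast
  then show ?thesis unfolding neuron_nets_def neuron_sum_def
    by (intro CollectI exI[of _ "c1 + c2"] exI[of _ "ps1 @ ps2"]) (auto simp: algebra_simps)
qed

lemma neuron_nets_sum:
  "finite I \<Longrightarrow> (\<And>i. i \<in> I \<Longrightarrow> Q i \<in> neuron_nets) \<Longrightarrow> (\<lambda>x. \<Sum>i\<in>I. Q i x) \<in> neuron_nets"
  by (induction I rule: finite_induct) (auto intro: neuron_nets_const neuron_nets_add)

lemma neuron_nets_scaleR:
  assumes "q \<in> neuron_nets"
  shows "(\<lambda>x. q x *\<^sub>R b) \<in> neuron_nets"
proof -
  obtain c ps where ps: "fst ` set ps \<subseteq> sample_pairs" and q: "q = (\<lambda>x. c + neuron_sum ps x)"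
    using assms unfolding neuron_nets_def by blast
  have "neuron_sum ps x *\<^sub>R b = neuron_sum (map (\<lambda>(p, a). (p, a *\<^sub>R b)) ps) x" for x
    unfolding neuron_sum_def by (induction ps) (auto simp: scaleR_add_left)
  then show ?thesis using ps unfolding q neuron_nets_def
    by (intro CollectI exI[of _ "c *\<^sub>R b"] exI[of _ "map (\<lambda>(p, a). (p, a *\<^sub>R b)) ps"])
       (auto simp: scaleR_add_left)
qed

definition approximable :: "('a \<Rightarrow> real) set" where
  "approximable = {h. \<forall>e>0. \<exists>q\<in>neuron_nets. \<forall>x\<in>X. \<bar>h x - q x\<bar> < e}"

lemma approximableD:
  "h \<in> approximable \<Longrightarrow> 0 < e \<Longrightarrow> \<exists>q\<in>neuron_nets. \<forall>x\<in>X. \<bar>h x - q x\<bar> < e"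
  by (simp add: approximable_def)

lemma neuron_nets_approximable: "q \<in> neuron_nets \<Longrightarrow> q \<in> approximable"
  unfolding approximable_def by force

lemma approximable_closed:
  assumes "\<And>e. 0 < e \<Longrightarrow> \<exists>h\<in>approximable. \<forall>x\<in>X. \<bar>g x - h x\<bar> < e"
  shows "g \<in> approximable"
  unfolding approximable_def
proof (intro CollectI allI impI)
  fix e :: real assume "0 < e"
  then obtain h where h: "h \<in> approximable" "\<forall>x\<in>X. \<bar>g x - h x\<bar> < e / 2"
    using assms[of "e / 2"] by auto
  then obtain q where "q \<in> neuron_nets" "\<forall>x\<in>X. \<bar>h x - q x\<bar> < e / 2"
    using approximableD[OF h(1), of "e / 2"] \<open>0 < e\<close> by auto
  with h(2) show "\<exists>q\<in>neuron_nets. \<forall>x\<in>X. \<bar>g x - q x\<bar> < e"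
    by (smt (verit, best) field_sum_of_halves)
qed

lemma approximable_add:
  assumes "h1 \<in> approximable" "h2 \<in> approximable"
  shows "(\<lambda>x. h1 x + h2 x) \<in> approximable"
  unfolding approximable_def
proof (intro CollectI allI impI)
  fix e :: real assume "0 < e"
  then obtain q1 q2 where "q1 \<in> neuron_nets" "\<forall>x\<in>X. \<bar>h1 x - q1 x\<bar> < e / 2"
    "q2 \<in> neuron_nets" "\<forall>x\<in>X. \<bar>h2 x - q2 x\<bar> < e / 2"
    using approximableD[OF assms(1), of "e / 2"] approximableD[OF assms(2), of "e / 2"] \<open>0 < e\<close>
    by auto
  then show "\<exists>q\<in>neuron_nets. \<forall>x\<in>X. \<bar>h1 x + h2 x - q x\<bar> < e"
    by (intro bexI[of _ "\<lambda>x. q1 x + q2 x"] neuron_nets_add ballI)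
       (smt (verit, best) field_sum_of_halves)+
qed

lemma approximable_scale:
  assumes "h \<in> approximable"
  shows "(\<lambda>x. a * h x) \<in> approximable"
proof (cases "a = 0")
  case True
  then show ?thesis using neuron_nets_approximable[OF neuron_nets_const[of 0]] by simp
next
  case False
  show ?thesis unfolding approximable_def
  proof (intro CollectI allI impI)
    fix e :: real assume "0 < e"
    then obtain q where q: "q \<in> neuron_nets" "\<forall>x\<in>X. \<bar>h x - q x\<bar> < e / \<bar>a\<bar>"
      using approximableD[OF assms, of "e / \<bar>a\<bar>"] \<open>0 < e\<close> False by auto
    have "\<bar>a * h x - a * q x\<bar> < e" if "x \<in> X" for x
    proof -
      have "\<bar>a * h x - a * q x\<bar> = \<bar>a\<bar> * \<bar>h x - q x\<bar>"
        by (metis abs_mult right_diff_distrib)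
      also have "\<dots> < \<bar>a\<bar> * (e / \<bar>a\<bar>)"
        using q(2) that False by (intro mult_strict_left_mono) auto
      finally show ?thesis using False by simp
    qed
    then show "\<exists>q\<in>neuron_nets. \<forall>x\<in>X. \<bar>a * h x - q x\<bar> < e"
      using neuron_nets_scaleR[OF q(1), of a]
      by (intro bexI[of _ "\<lambda>x. q x * a"]) (auto simp: mult.commute)
  qed
qed

lemma interior_ray_in:
  assumes "x \<in> interior X"
  shows "\<exists>l>0. x + l *\<^sub>R v \<in> X"
proof -
  obtain r where "0 < r" "ball x r \<subseteq> X" using assms by (meson mem_interior)
  moreover have "r * norm v < r * (2 * norm v + 1)"
    using \<open>0 < r\<close> by (intro mult_strict_left_mono) (auto intro: add_nonneg_pos)
  then have "x + (r / (2 * norm v + 1)) *\<^sub>R v \<in> ball x r"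
    using \<open>0 < r\<close> by (simp add: dist_norm pos_divide_less_eq add_nonneg_pos)
  moreover have "0 < r / (2 * norm v + 1)"
    using \<open>0 < r\<close> by (simp add: add_nonneg_pos)
  ultimately show ?thesis by (intro exI[of _ "r / (2 * norm v + 1)"]) auto
qed

lemma relu_ridge_in_neuron_nets:
  assumes "x1 \<in> X" "0 < l" "x1 + l *\<^sub>R v \<in> X" "v \<noteq> 0"
  shows "(\<lambda>x. a * relu (B v x - B v x1)) \<in> neuron_nets"
proof -
  define p where "p = (x1, x1 + l *\<^sub>R v)"
  have Bvv: "0 < B v v" using positive assms(4) by simp
  have p: "p \<in> sample_pairs" using assms unfolding sample_pairs_def p_def by auto
  have "neuron p x = relu (B v x - B v x1) / (l * B v v)" for x
    using assms(2) Bvv relu_mult_pos[OF assms(2), of "B v x - B v x1"]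
    by (simp add: neuron_def p_def B_scaleR_left B_scaleR_right B_diff_right right_diff_distrib)
  then have "(\<lambda>x. neuron p x *\<^sub>R (a * (l * B v v))) = (\<lambda>x. a * relu (B v x - B v x1))"
    using Bvv assms(2) by auto
  then show ?thesis using neuron_nets_neuron[OF p] by metis
qed

lemma relu_sum_ridge_in_neuron_nets:
  assumes "v \<noteq> 0" "snd ` set ps \<subseteq> B v ` interior X"
  shows "(\<lambda>x. relu_sum c ps (B v x)) \<in> neuron_nets"
  using assms(2)
proof (induction ps)
  case Nil
  then show ?case by (simp add: relu_sum_def neuron_nets_const)
next
  case (Cons q ps)
  obtain a s where q: "q = (a, s)" by force
  then obtain x1 where "x1 \<in> interior X" "s = B v x1" using Cons.prems by auto
  then have "(\<lambda>x. a * relu (B v x - s)) \<in> neuron_nets"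
    using relu_ridge_in_neuron_nets interior_ray_in interior_subset assms(1) by blast
  from neuron_nets_add[OF this Cons.IH] Cons.prems show ?case
    by (simp add: q relu_sum_def algebra_simps)
qed

lemma ridge_approximable:
  assumes g: "continuous_on (B v ` X) g"
  shows "(\<lambda>x. g (B v x)) \<in> approximable"
proof (cases "v = 0")
  case True
  then show ?thesis
    using neuron_nets_approximable[OF neuron_nets_const[of "g 0"]] by (simp add: B_zero_left)
next
  case False
  define K where "K = B v ` X"
  define T where "T = B v ` interior X"
  have K: "compact K"
    unfolding K_def by (rule compact_continuous_image[OF continuous_on_B compact])
  have TK: "T \<subseteq> K" unfolding T_def K_def using interior_subset by blast
  \<comment> \<open>Knots at interior points are admissible, and they are dense since X is the closure
    of its interior.\<close>
  have KT: "K \<subseteq> closure T"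
    unfolding K_def T_def
    using image_mono[OF regular_closed, of "B v"]
      image_closure_subset[OF continuous_on_B closed_closure closure_subset] by blast
  show ?thesis
  proof (rule approximable_closed)
    fix e :: real assume "0 < e"
    then obtain c ps where ps: "snd ` set ps \<subseteq> T" "\<forall>t\<in>K. \<bar>g t - relu_sum c ps t\<bar> < e"
      using relu_sum_approx[OF K TK KT g[folded K_def]] by blast
    show "\<exists>h\<in>approximable. \<forall>x\<in>X. \<bar>g (B v x) - h x\<bar> < e"
    proof (intro bexI ballI)
      show "(\<lambda>x. relu_sum c ps (B v x)) \<in> approximable"
        using relu_sum_ridge_in_neuron_nets[OF False ps(1)[unfolded T_def]]
        by (rule neuron_nets_approximable)
      show "\<bar>g (B v x) - relu_sum c ps (B v x)\<bar> < e" if "x \<in> X" for x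
        using ps(2) that unfolding K_def by blast
    qed
  qed
qed

inductive_set exp_ridge_sums :: "('a \<Rightarrow> real) set" where
  exp_ridge: "(\<lambda>x. c * exp (B v x)) \<in> exp_ridge_sums"
| add: "f \<in> exp_ridge_sums \<Longrightarrow> g \<in> exp_ridge_sums \<Longrightarrow> (\<lambda>x. f x + g x) \<in> exp_ridge_sums"

lemma exp_ridge_sums_mult:
  assumes "f \<in> exp_ridge_sums" "g \<in> exp_ridge_sums"
  shows "(\<lambda>x. f x * g x) \<in> exp_ridge_sums"
proof -
  have exp_mult: "(\<lambda>x. c * exp (B v x) * g x) \<in> exp_ridge_sums" if "g \<in> exp_ridge_sums" for c v g
    using that
  proof induction
    case (exp_ridge c' v')
    have "(\<lambda>x. (c * c') * exp (B (v + v') x)) \<in> exp_ridge_sums" by (rule exp_ridge_sums.exp_ridge)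
    then show ?case by (simp add: B_add_left exp_add mult_ac)
  next
    case (add f g)
    then show ?case using exp_ridge_sums.add by (simp add: distrib_left)
  qed
  from assms show ?thesis
  proof induction
    case (exp_ridge c v)
    then show ?case using exp_mult by simp
  next
    case (add f1 f2)
    then show ?case using exp_ridge_sums.add by (simp add: distrib_right)
  qed
qed

lemma exp_ridge_sums_const: "(\<lambda>x. c) \<in> exp_ridge_sums"
  using exp_ridge_sums.exp_ridge[of c 0] by (simp add: B_zero_left)

lemma exp_ridge_sums_continuous: "f \<in> exp_ridge_sums \<Longrightarrow> continuous_on X f"
  by (induction rule: exp_ridge_sums.induct) (auto intro!: continuous_intros continuous_on_B)

lemma exp_ridge_sums_approximable: "f \<in> exp_ridge_sums \<Longrightarrow> f \<in> approximable"
proof (induction rule: exp_ridge_sums.induct)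
  case (exp_ridge c v)
  have "continuous_on (B v ` X) exp" by (intro continuous_intros)
  from approximable_scale[OF ridge_approximable[OF this]] show ?case .
next
  case (add f g)
  then show ?case using approximable_add by blast
qed

lemma exp_ridge_sums_separating:
  assumes "x \<noteq> y"
  shows "\<exists>f\<in>exp_ridge_sums. f x \<noteq> f y"
proof -
  have "B (x - y) y < B (x - y) x"
    using positive[of "x - y"] assms by (simp add: B_diff_right)
  then have "exp (B (x - y) x) \<noteq> exp (B (x - y) y)" by simp
  then show ?thesis using exp_ridge_sums.exp_ridge[of 1 "x - y"] by fastforce
qed

lemma continuous_approximable:
  assumes f: "continuous_on X f"
  shows "f \<in> approximable"
proof (rule approximable_closed)
  fix e :: real assume "0 < e"
  have "\<exists>g. g \<in> exp_ridge_sums \<and> (\<forall>x\<in>X. \<bar>f x - g x\<bar> < e)"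
  proof (rule Stone_Weierstrass_HOL[OF compact])
    show "\<exists>g. g \<in> exp_ridge_sums \<and> g x \<noteq> g y" if "x \<in> X \<and> y \<in> X \<and> x \<noteq> y" for x y
      using exp_ridge_sums_separating that by blast
  qed (use exp_ridge_sums_const exp_ridge_sums_continuous exp_ridge_sums.add
      exp_ridge_sums_mult f \<open>0 < e\<close> in auto)
  then show "\<exists>h\<in>approximable. \<forall>x\<in>X. \<bar>f x - h x\<bar> < e"
    using exp_ridge_sums_approximable by blast
qed

theorem neuron_nets_dense:
  fixes f :: "'a \<Rightarrow> 'b::euclidean_space"
  assumes f: "continuous_on X f" and e: "0 < e"
  shows "\<exists>Q\<in>neuron_nets. \<forall>x\<in>X. norm (f x - Q x) < e"
proof -
  define e' where "e' = e / real DIM('b)"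
  have "0 < e'" using e by (simp add: e'_def)
  have "continuous_on X (\<lambda>x. f x \<bullet> b)" for b
    using f by (intro continuous_intros)
  then have "\<exists>q\<in>neuron_nets. \<forall>x\<in>X. \<bar>f x \<bullet> b - q x\<bar> < e'" for b
    using approximableD[OF continuous_approximable \<open>0 < e'\<close>] by blast
  then obtain q where q: "\<And>b. q b \<in> neuron_nets" "\<And>b x. x \<in> X \<Longrightarrow> \<bar>f x \<bullet> b - q b x\<bar> < e'"
    by metis
  define Q where "Q x = (\<Sum>b\<in>Basis. q b x *\<^sub>R b)" for x
  have "Q \<in> neuron_nets"
    unfolding Q_def by (intro neuron_nets_sum neuron_nets_scaleR q(1)) simp
  moreover have "norm (f x - Q x) < e" if x: "x \<in> X" for x
  proof -
    have "norm (f x - Q x) = norm (\<Sum>b\<in>Basis. (f x \<bullet> b - q b x) *\<^sub>R b)"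
      unfolding Q_def by (simp add: scaleR_diff_left sum_subtractf euclidean_representation)
    also have "\<dots> \<le> (\<Sum>b\<in>Basis. \<bar>f x \<bullet> b - q b x\<bar>)"
      by (rule order_trans[OF norm_sum]) simp
    also have "\<dots> < (\<Sum>b\<in>(Basis::'b set). e')"
      using q(2)[OF x] by (intro sum_strict_mono) auto
    also have "\<dots> = e" by (simp add: e'_def)
    finally show ?thesis .
  qed
  ultimately show ?thesis by blast
qed

lemma neuron_sums_dense:
  fixes f :: "'a \<Rightarrow> 'b::euclidean_space"
  assumes f: "continuous_on X f" and e: "0 < e" and p0: "p0 \<in> sample_pairs"
  shows "\<exists>c ps. ps \<noteq> [] \<and> fst ` set ps \<subseteq> sample_pairs \<and> (\<forall>x\<in>X. norm (f x - (c + neuron_sum ps x)) < e)"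
proof -
  obtain c ps where "fst ` set ps \<subseteq> sample_pairs" "\<forall>x\<in>X. norm (f x - (c + neuron_sum ps x)) < e"
    using neuron_nets_dense[OF f e] unfolding neuron_nets_def by blast
  \<comment> \<open>A zero-weight neuron at p0 keeps the last layer of positive width.\<close>
  moreover have "neuron_sum ((p0, 0) # ps) = neuron_sum ps"
    by (simp add: neuron_sum_def fun_eq_iff)
  ultimately show ?thesis
    using p0 by (intro exI[of _ c] exI[of _ "(p0, 0) # ps"]) auto
qed

end

section \<open>Sampled networks\<close>

definition sample_weight :: "nat \<Rightarrow> (nat \<Rightarrow> real) \<Rightarrow> (nat \<Rightarrow> real) \<Rightarrow> nat \<Rightarrow> real" where
  "sample_weight n y1 y2 = (\<lambda>j. (y2 j - y1 j) / (vnorm n (\<lambda>k. y2 k - y1 k))\<^sup>2)"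

definition sample_bias :: "nat \<Rightarrow> (nat \<Rightarrow> real) \<Rightarrow> (nat \<Rightarrow> real) \<Rightarrow> real" where
  "sample_bias n y1 y2 = vinner n (sample_weight n y1 y2) y1"

lemma vinner_self_nonneg: "0 \<le> vinner n u u"
  unfolding vinner_def by (intro sum_nonneg) simp

lemma relu_sampled_unit:
  "relu (vinner n (sample_weight n y1 y2) y - sample_bias n y1 y2) =
   relu (vinner n (\<lambda>k. y2 k - y1 k) (\<lambda>k. y k - y1 k)) / vinner n (\<lambda>k. y2 k - y1 k) (\<lambda>k. y2 k - y1 k)"
proof -
  have "vinner n (sample_weight n y1 y2) y - sample_bias n y1 y2 =
    vinner n (\<lambda>k. y2 k - y1 k) (\<lambda>k. y k - y1 k) / vinner n (\<lambda>k. y2 k - y1 k) (\<lambda>k. y2 k - y1 k)"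
    unfolding sample_bias_def sample_weight_def vinner_def vnorm_def
    using vinner_self_nonneg[of n "\<lambda>k. y2 k - y1 k"]
    by (simp add: vinner_def sum_divide_distrib[symmetric] sum_subtractf[symmetric] right_diff_distrib
        diff_divide_distrib[symmetric])
  then show ?thesis by (simp add: relu_divide_nonneg vinner_self_nonneg)
qed

lemma sampled_network_exists:
  fixes Y :: "nat \<Rightarrow> 'a::euclidean_space \<Rightarrow> nat \<Rightarrow> real" and anchor target :: "nat \<Rightarrow> nat \<Rightarrow> 'a"
    and N :: "nat \<Rightarrow> nat"
  defines "unit l i x \<equiv>
    relu (vinner (N l) (sample_weight (N l) (Y l (anchor (Suc l) i)) (Y l (target (Suc l) i))) (Y l x)
      - sample_bias (N l) (Y l (anchor (Suc l) i)) (Y l (target (Suc l) i)))"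
  assumes L: "L = Suc L0"
    and Y0: "\<And>x. x \<in> X \<Longrightarrow> Y 0 x = coords x"
    and samples: "\<And>l i. l \<in> {1..L} \<Longrightarrow> i < (N(L := NL)) l \<Longrightarrow>
      anchor l i \<in> X \<and> target l i \<in> X \<and> Y (l - 1) (anchor l i) \<noteq> Y (l - 1) (target l i)"
    and hidden: "\<And>l x. Suc l < L \<Longrightarrow> x \<in> X \<Longrightarrow> Y (Suc l) x = (\<lambda>i. if i < N (Suc l) then unit l i x else 0)"
  shows "\<exists>W b. is_sampled X L (N(L := NL)) W b \<and>
    (\<forall>x\<in>X. \<forall>i<NL. layer (N(L := NL)) W b L x i = unit L0 i x)"
proof (intro exI conjI ballI allI impI)
  define N' where "N' = N(L := NL)"
  define W where
    "W l i = sample_weight (N' (l - 1)) (Y (l - 1) (anchor l i)) (Y (l - 1) (target l i))" for l i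
  define b where
    "b l i = sample_bias (N' (l - 1)) (Y (l - 1) (anchor l i)) (Y (l - 1) (target l i))" for l i
  have layers: "layer N' W b l x = Y l x" if "l < L" "x \<in> X" for l x
    using that(1)
  proof (induction l)
    case 0
    then show ?case using Y0[OF that(2)] by simp
  next
    case (Suc l)
    then have "layer N' W b (Suc l) x =
        (\<lambda>i. if i < N' (Suc l) then relu (vinner (N' l) (W (Suc l) i) (Y l x) - b (Suc l) i) else 0)"
      by (simp cong: if_cong)
    also have "\<dots> = Y (Suc l) x"
      using hidden[OF Suc.prems that(2)] Suc.prems
      by (simp add: N'_def W_def b_def unit_def cong: if_cong)
    finally show ?case .
  qed
  show "is_sampled X L N' W b"
    unfolding is_sampled_def
  proof (intro ballI allI impI)
    fix l i assume l: "l \<in> {1..L}" and i: "i < N' l"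
    then have "l - 1 < L" by auto
    with samples[OF l i[unfolded N'_def]]
    show "\<exists>x1\<in>X. \<exists>x2\<in>X. layer N' W b (l - 1) x1 \<noteq> layer N' W b (l - 1) x2 \<and>
        W l i = (\<lambda>j. (layer N' W b (l - 1) x2 j - layer N' W b (l - 1) x1 j) /
                   (vnorm (N' (l - 1)) (\<lambda>k. layer N' W b (l - 1) x2 k - layer N' W b (l - 1) x1 k))\<^sup>2) \<and>
        b l i = vinner (N' (l - 1)) (W l i) (layer N' W b (l - 1) x1)"
      by (intro bexI[of _ "anchor l i"] bexI[of _ "target l i"])
         (auto simp: layers W_def b_def sample_weight_def sample_bias_def)
  qed
  show "layer N' W b L x i = unit L0 i x" if "x \<in> X" "i < NL" for x i
    using that layers[of L0 x] by (simp add: L N'_def W_def b_def unit_def)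
qed

lemma net_out_sum_list:
  assumes "N L = length ps" "\<And>i. i < length ps \<Longrightarrow> layer N W b L x i = g (fst (ps ! i))"
  shows "net_out N W b L (\<lambda>i. snd (ps ! i)) b0 x = (\<Sum>(p, a)\<leftarrow>ps. g p *\<^sub>R a) - b0"
  using assms by (simp add: net_out_def sum_list_sum_nth atLeast0LessThan split_beta)

section \<open>Coordinate hidden layers\<close>

lemma distinct_basis_enum: "distinct (basis_enum :: 'a::euclidean_space list)"
  and set_basis_enum: "set (basis_enum :: 'a list) = Basis"
proof -
  have "\<exists>bs. distinct bs \<and> set bs = (Basis :: 'a set)"
    using finite_distinct_list[OF finite_Basis] by metis
  then show "distinct (basis_enum :: 'a list)" "set (basis_enum :: 'a list) = Basis"
    unfolding basis_enum_def by (metis (mono_tags, lifting) someI_ex)+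
qed

lemma length_basis_enum: "length (basis_enum :: 'a::euclidean_space list) = DIM('a)"
  using distinct_basis_enum set_basis_enum distinct_card by metis

text \<open>Indices beyond the input dimension repeat coordinate 0, so a hidden layer of any width
  at least DIM('a) can carry all coordinates.\<close>
definition padded_basis :: "nat \<Rightarrow> 'a::euclidean_space" where
  "padded_basis i = basis_enum ! (if i < DIM('a) then i else 0)"

lemma Basis_eq_padded_basis_image: "Basis = (padded_basis ` {..<DIM('a)} :: 'a::euclidean_space set)"
proof -
  have "Basis = set (basis_enum :: 'a list)" by (simp add: set_basis_enum)
  also have "\<dots> = padded_basis ` {..<DIM('a)}"
    unfolding padded_basis_def set_conv_nth length_basis_enum by auto
  finally show ?thesis .
qed

lemma padded_basis_in_Basis: "(padded_basis i :: 'a::euclidean_space) \<in> Basis"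
proof -
  have "(padded_basis i :: 'a) \<in> padded_basis ` {..<DIM('a)}"
    by (rule image_eqI[of _ _ "if i < DIM('a) then i else 0"]) (auto simp: padded_basis_def)
  then show ?thesis by (subst Basis_eq_padded_basis_image)
qed

lemma ex_padded_coord_nonzero:
  "(u :: 'a::euclidean_space) \<noteq> 0 \<Longrightarrow> \<exists>j<DIM('a). u \<bullet> padded_basis j \<noteq> 0"
proof -
  assume "u \<noteq> 0"
  then obtain b where b: "b \<in> Basis" "u \<bullet> b \<noteq> 0"
    using euclidean_all_zero_iff by blast
  from b(1) have "b \<in> padded_basis ` {..<DIM('a)}"
    by (subst (asm) Basis_eq_padded_basis_image)
  then show ?thesis using b(2) by blast
qed

lemma coords_padded_basis: "coords x = (\<lambda>j. if j < DIM('a) then x \<bullet> padded_basis j else 0)"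
  for x :: "'a::euclidean_space"
  unfolding coords_def padded_basis_def by auto

definition coord_features :: "nat \<Rightarrow> (nat \<Rightarrow> real) \<Rightarrow> real \<Rightarrow> 'a::euclidean_space \<Rightarrow> nat \<Rightarrow> real" where
  "coord_features n c s x = (\<lambda>k. if k < n then (x \<bullet> padded_basis k - c k) / s else 0)"

definition coord_form :: "nat \<Rightarrow> real \<Rightarrow> 'a::euclidean_space \<Rightarrow> 'a \<Rightarrow> real" where
  "coord_form n s u w = vinner n (\<lambda>k. u \<bullet> padded_basis k / s) (\<lambda>k. w \<bullet> padded_basis k / s)"

lemma vinner_coord_features:
  "vinner n (\<lambda>k. coord_features n c s x2 k - coord_features n c s x1 k)
            (\<lambda>k. coord_features n c s x k - coord_features n c s x1 k)
   = coord_form n s (x2 - x1) (x - x1)"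
  unfolding coord_form_def coord_features_def vinner_def
  by (intro sum.cong) (simp_all add: inner_diff_left diff_divide_distrib)

lemma bilinear_coord_form: "bilinear (coord_form n s)"
  unfolding bilinear_def coord_form_def vinner_def
  by (auto intro!: linearI simp: inner_add_left add_divide_distrib distrib_left distrib_right
      sum.distrib sum_distrib_left mult_ac)

lemma coord_form_pos:
  assumes "DIM('a) \<le> n" "s \<noteq> 0" "(u :: 'a::euclidean_space) \<noteq> 0"
  shows "0 < coord_form n s u u"
proof -
  obtain j where j: "j < DIM('a)" "u \<bullet> padded_basis j \<noteq> 0"
    using ex_padded_coord_nonzero[OF assms(3)] by blast
  have "0 < (u \<bullet> padded_basis j / s) * (u \<bullet> padded_basis j / s)"
    using j assms(2) by (metis divide_eq_0_iff not_real_square_gt_zero)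
  also have "\<dots> \<le> (\<Sum>k<n. (u \<bullet> padded_basis k / s) * (u \<bullet> padded_basis k / s))"
    using j assms(1) by (intro member_le_sum) auto
  finally show ?thesis unfolding coord_form_def vinner_def .
qed

lemma coord_features_inj:
  assumes "DIM('a) \<le> n" "s \<noteq> 0"
    and "coord_features n c s x1 = coord_features n c s (x2 :: 'a::euclidean_space)"
  shows "x1 = x2"
proof -
  have "0 = vinner n (\<lambda>k. coord_features n c s x2 k - coord_features n c s x1 k)
            (\<lambda>k. coord_features n c s x2 k - coord_features n c s x1 k)"
    using assms(3) by (simp add: vinner_def)
  then have "\<not> 0 < coord_form n s (x2 - x1) (x2 - x1)"
    by (simp add: vinner_coord_features)
  then show ?thesis using coord_form_pos[OF assms(1,2), of "x2 - x1"] by auto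
qed

lemma coord_form_padded_basis_left:
  fixes w :: "'a::euclidean_space"
  shows "coord_form n s (padded_basis i) w =
    (w \<bullet> padded_basis i) * coord_form n s (padded_basis i) (padded_basis i :: 'a)"
  unfolding coord_form_def vinner_def sum_distrib_left
proof (rule sum.cong[OF refl])
  fix k
  show "padded_basis i \<bullet> (padded_basis k :: 'a) / s * (w \<bullet> padded_basis k / s) =
    w \<bullet> padded_basis i *
      (padded_basis i \<bullet> (padded_basis k :: 'a) / s * (padded_basis i \<bullet> (padded_basis k :: 'a) / s))"
  proof (cases "padded_basis i = (padded_basis k :: 'a)")
    case True
    then show ?thesis using padded_basis_in_Basis[of k, where 'a='a] by simp
  next
    case False
    then show ?thesis
      using padded_basis_in_Basis[of i, where 'a='a] padded_basis_in_Basis[of k, where 'a='a]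
      by (simp add: inner_Basis)
  qed
qed

lemma coord_form_hidden_unit:
  fixes w :: "'a::euclidean_space"
  assumes "DIM('a) \<le> n" "s \<noteq> 0" "0 < r" "0 \<le> w \<bullet> padded_basis i"
  shows "relu (coord_form n s (r *\<^sub>R padded_basis i) w) /
    coord_form n s (r *\<^sub>R padded_basis i) (r *\<^sub>R padded_basis i :: 'a) = w \<bullet> padded_basis i / r"
proof -
  define Q where "Q = coord_form n s (padded_basis i) (padded_basis i :: 'a)"
  have "padded_basis i \<noteq> (0 :: 'a)" using padded_basis_in_Basis nonzero_Basis by blast
  then have "0 < Q" unfolding Q_def by (rule coord_form_pos[OF assms(1,2)])
  have "coord_form n s (padded_basis i) w = (w \<bullet> padded_basis i) * Q"
    unfolding Q_def by (rule coord_form_padded_basis_left)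
  then have "coord_form n s (r *\<^sub>R padded_basis i) w = r * (w \<bullet> padded_basis i) * Q"
    and "coord_form n s (r *\<^sub>R padded_basis i) (r *\<^sub>R padded_basis i :: 'a) = r * r * Q"
    by (simp_all add: bilinear_lmul[OF bilinear_coord_form] bilinear_rmul[OF bilinear_coord_form] Q_def)
  then show ?thesis using assms(3,4) \<open>0 < Q\<close> by (simp add: relu_eq_self)
qed

text \<open>The invariant of the construction: layer 0 outputs the coordinates of x, every later
  hidden layer the coordinates shifted by lo and scaled by 1 / r.\<close>
definition hidden_rep :: "(nat \<Rightarrow> nat) \<Rightarrow> (nat \<Rightarrow> 'a::euclidean_space) \<Rightarrow> real \<Rightarrow> nat \<Rightarrow> 'a \<Rightarrow> nat \<Rightarrow> real" where
  "hidden_rep N lo r l =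
     coord_features (N l) (\<lambda>k. if l = 0 then 0 else lo k \<bullet> padded_basis k) (if l = 0 then 1 else r)"

lemma hidden_rep_0: "N 0 = DIM('a) \<Longrightarrow> hidden_rep N lo r 0 = (coords :: 'a::euclidean_space \<Rightarrow> _)"
  by (intro ext) (simp add: hidden_rep_def coord_features_def coords_padded_basis)

lemma hidden_rep_Suc:
  "hidden_rep N lo r (Suc l) x =
     (\<lambda>i. if i < N (Suc l) then (x - lo i) \<bullet> padded_basis i / r else 0)"
  by (simp add: hidden_rep_def coord_features_def inner_diff_left fun_eq_iff)

lemma hidden_rep_sampled_unit:
  fixes N :: "nat \<Rightarrow> nat" and lo :: "nat \<Rightarrow> 'a::euclidean_space" and r :: real and l :: nat
  defines "Y \<equiv> hidden_rep N lo r l"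
  shows "relu (vinner (N l) (sample_weight (N l) (Y x1) (Y x2)) (Y x) - sample_bias (N l) (Y x1) (Y x2)) =
    relu (coord_form (N l) (if l = 0 then 1 else r) (x2 - x1) (x - x1)) /
    coord_form (N l) (if l = 0 then 1 else r) (x2 - x1) (x2 - x1)"
  unfolding relu_sampled_unit Y_def hidden_rep_def vinner_coord_features ..

lemma hidden_rep_inj:
  assumes "DIM('a) \<le> N l" "0 < r"
    and "hidden_rep N lo r l x1 = hidden_rep N lo r l (x2 :: 'a::euclidean_space)"
  shows "x1 = x2"
  using assms coord_features_inj[where 'a='a, of "N l" "if l = 0 then 1 else r"]
  by (simp add: hidden_rep_def)

lemma hidden_rep_hidden_layer:
  fixes lo :: "nat \<Rightarrow> 'a::euclidean_space"
  assumes "DIM('a) \<le> N l" "0 < r" "\<And>i. lo i \<bullet> padded_basis i \<le> x \<bullet> padded_basis i"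
  shows "hidden_rep N lo r (Suc l) x = (\<lambda>i. if i < N (Suc l) then
      relu (vinner (N l)
          (sample_weight (N l) (hidden_rep N lo r l (lo i)) (hidden_rep N lo r l (lo i + r *\<^sub>R padded_basis i)))
          (hidden_rep N lo r l x)
        - sample_bias (N l) (hidden_rep N lo r l (lo i)) (hidden_rep N lo r l (lo i + r *\<^sub>R padded_basis i)))
    else 0)"
proof -
  have unit: "relu (coord_form (N l) (if l = 0 then 1 else r) (r *\<^sub>R padded_basis i) (x - lo i)) /
      coord_form (N l) (if l = 0 then 1 else r) (r *\<^sub>R padded_basis i) (r *\<^sub>R padded_basis i :: 'a)
    = (x - lo i) \<bullet> padded_basis i / r" for i
    using assms by (intro coord_form_hidden_unit) (auto simp: inner_diff_left)
  show ?thesis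
    unfolding hidden_rep_Suc hidden_rep_sampled_unit add_diff_cancel_left' unit ..
qed

lemma coordinate_network_exists:
  fixes X :: "'a::euclidean_space set" and lo :: "nat \<Rightarrow> 'a" and P :: "nat \<Rightarrow> 'a \<times> 'a"
    and N :: "nat \<Rightarrow> nat"
  assumes r: "0 < r" and lo: "\<And>i. lo i \<in> X" "\<And>i. lo i + r *\<^sub>R padded_basis i \<in> X"
    and lo_le: "\<And>i x. x \<in> X \<Longrightarrow> lo i \<bullet> padded_basis i \<le> x \<bullet> padded_basis i"
    and L: "L = Suc L0" and N: "\<And>l. l < L \<Longrightarrow> DIM('a) \<le> N l" "N 0 = DIM('a)"
    and P: "\<And>i. i < NL \<Longrightarrow> fst (P i) \<in> X \<and> snd (P i) \<in> X \<and> fst (P i) \<noteq> snd (P i)"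
  defines "B \<equiv> coord_form (N L0) (if L0 = 0 then 1 else r)"
  shows "\<exists>W b. is_sampled X L (N(L := NL)) W b \<and> (\<forall>x\<in>X. \<forall>i<NL. layer (N(L := NL)) W b L x i =
    relu (B (snd (P i) - fst (P i)) (x - fst (P i))) / B (snd (P i) - fst (P i)) (snd (P i) - fst (P i)))"
proof -
  define Y where "Y = hidden_rep N lo r"
  define anchor where "anchor l i = (if l < L then lo i else fst (P i))" for l i
  define target where "target l i = (if l < L then lo i + r *\<^sub>R padded_basis i else snd (P i))" for l i
  have "padded_basis i \<noteq> (0 :: 'a)" for i
    using padded_basis_in_Basis nonzero_Basis by blast
  then have points: "anchor l i \<in> X \<and> target l i \<in> X \<and> anchor l i \<noteq> target l i"
    if "l \<in> {1..L}" "i < (N(L := NL)) l" for l i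
    using that P[of i] lo r by (cases "l < L") (auto simp: anchor_def target_def)
  have samples: "anchor l i \<in> X \<and> target l i \<in> X \<and> Y (l - 1) (anchor l i) \<noteq> Y (l - 1) (target l i)"
    if "l \<in> {1..L}" "i < (N(L := NL)) l" for l i
  proof -
    have "l - 1 < L" using that(1) by auto
    then show ?thesis
      using points[OF that] hidden_rep_inj[where N = N and l = "l - 1", OF N(1) r] by (auto simp: Y_def)
  qed
  have hidden: "Y (Suc l) x = (\<lambda>i. if i < N (Suc l) then
      relu (vinner (N l) (sample_weight (N l) (Y l (anchor (Suc l) i)) (Y l (target (Suc l) i))) (Y l x)
        - sample_bias (N l) (Y l (anchor (Suc l) i)) (Y l (target (Suc l) i))) else 0)"
    if "Suc l < L" "x \<in> X" for l x
    using hidden_rep_hidden_layer[where N = N and l = l, OF N(1) r lo_le, of x] that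
    by (simp add: Y_def anchor_def target_def cong: if_cong)
  show ?thesis
    using sampled_network_exists[where X = X and Y = Y and N = N and NL = NL, OF L _ samples hidden]
    by (simp add: Y_def hidden_rep_0 N(2) L anchor_def target_def hidden_rep_sampled_unit B_def)
qed

lemma sampled_networks_dense:
  fixes X :: "'a::euclidean_space set" and f :: "'a \<Rightarrow> 'b::euclidean_space"
    and lo :: "nat \<Rightarrow> 'a" and N :: "nat \<Rightarrow> nat"
  assumes X: "compact X" "X \<subseteq> closure (interior X)"
    and r: "0 < r" and lo: "\<And>i. lo i \<in> X" "\<And>i. lo i + r *\<^sub>R padded_basis i \<in> X"
    and lo_le: "\<And>i x. x \<in> X \<Longrightarrow> lo i \<bullet> padded_basis i \<le> x \<bullet> padded_basis i"
    and L: "L = Suc L0" and N: "\<And>l. l < L \<Longrightarrow> DIM('a) \<le> N l" "N 0 = DIM('a)"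
    and f: "continuous_on X f" and e: "0 < e"
  shows "\<exists>NL>0. \<exists>W b c b0. is_sampled X L (N(L := NL)) W b \<and>
           (\<forall>x\<in>X. norm (net_out (N(L := NL)) W b L c b0 x - f x) < e)"
proof -
  define B :: "'a \<Rightarrow> 'a \<Rightarrow> real" where "B = coord_form (N L0) (if L0 = 0 then 1 else r)"
  interpret S: sampling_domain X B
    using X bilinear_coord_form coord_form_pos[OF N(1)] r unfolding B_def L
    by unfold_locales auto
  have "padded_basis 0 \<noteq> (0 :: 'a)"
    using padded_basis_in_Basis nonzero_Basis by blast
  then have "(lo 0, lo 0 + r *\<^sub>R padded_basis 0) \<in> S.sample_pairs"
    using lo r by (simp add: S.sample_pairs_def)
  then obtain c ps where ps: "ps \<noteq> []" "fst ` set ps \<subseteq> S.sample_pairs"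
    and approx: "\<forall>x\<in>X. norm (f x - (c + S.neuron_sum ps x)) < e"
    using S.neuron_sums_dense[OF f e] by blast
  have "fst (fst (ps ! i)) \<in> X \<and> snd (fst (ps ! i)) \<in> X \<and> fst (fst (ps ! i)) \<noteq> snd (fst (ps ! i))"
    if "i < length ps" for i
    using ps(2) nth_mem[OF that] by (auto simp: S.sample_pairs_def)
  then obtain W b where sampled: "is_sampled X L (N(L := length ps)) W b"
    and last: "\<And>x i. x \<in> X \<Longrightarrow> i < length ps \<Longrightarrow>
      layer (N(L := length ps)) W b L x i = S.neuron (fst (ps ! i)) x"
    using coordinate_network_exists[where N = N and NL = "length ps" and P = "\<lambda>i. fst (ps ! i)",
        OF r lo lo_le L N]
    unfolding B_def[symmetric] S.neuron_def by (auto simp: split_beta)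
  have net: "net_out (N(L := length ps)) W b L (\<lambda>i. snd (ps ! i)) (- c) x = c + S.neuron_sum ps x"
    if "x \<in> X" for x
    using net_out_sum_list[of "N(L := length ps)" L ps W b x "\<lambda>p. S.neuron p x"] last[OF that]
    by (simp add: S.neuron_sum_def)
  show ?thesis
  proof (intro exI conjI ballI)
    show "norm (net_out (N(L := length ps)) W b L (\<lambda>i. snd (ps ! i)) (- c) x - f x) < e" if "x \<in> X" for x
      using net[OF that] approx that by (simp add: norm_minus_commute)
  qed (use sampled ps(1) in auto)
qed

section \<open>Thickenings\<close>

lemma thickening_subset_closure_interior:
  fixes A :: "'a::euclidean_space set"
  assumes "closed A" "A \<noteq> {}" "0 < e"
  shows "{x. infdist x A \<le> e} \<subseteq> closure (interior {x. infdist x A \<le> e})"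
proof
  fix x0 assume x0: "x0 \<in> {x. infdist x A \<le> e}"
  define U where "U = {x. infdist x A < e}"
  have "open U" unfolding U_def by (intro open_Collect_less continuous_intros)
  then have U: "U \<subseteq> interior {x. infdist x A \<le> e}"
    by (intro interior_maximal) (auto simp: U_def)
  obtain a where a: "a \<in> A" "infdist x0 A = dist x0 a"
    using infdist_attains_inf[OF assms(1,2)] by metis
  show "x0 \<in> closure (interior {x. infdist x A \<le> e})"
  proof (cases "x0 = a")
    case True
    then have "x0 \<in> U" using a assms(3) by (simp add: U_def)
    then show ?thesis using U closure_subset by blast
  next
    case False
    have "open_segment x0 a \<subseteq> U"
    proof
      fix y assume "y \<in> open_segment x0 a"
      then have "infdist y A < dist x0 a"
        using infdist_le[OF a(1), of y] dist_in_open_segment[of y x0 a] by linarith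
      then show "y \<in> U" using x0 a(2) by (simp add: U_def)
    qed
    then have "closure (open_segment x0 a) \<subseteq> closure (interior {x. infdist x A \<le> e})"
      using U by (intro closure_mono) blast
    then show ?thesis using False by auto
  qed
qed

lemma thickening_inner_lower_bound:
  fixes A :: "'a::euclidean_space set"
  assumes "closed A" "A \<noteq> {}" "infdist x A \<le> e" "norm b = 1" "\<And>y. y \<in> A \<Longrightarrow> z \<bullet> b \<le> y \<bullet> b"
  shows "z \<bullet> b - e \<le> x \<bullet> b"
proof -
  obtain a where a: "a \<in> A" "infdist x A = dist x a"
    using infdist_attains_inf[OF assms(1,2)] by metis
  have "\<bar>(a - x) \<bullet> b\<bar> \<le> e"
    using Cauchy_Schwarz_ineq2[of "a - x" b] assms(3,4) a(2) by (simp add: dist_norm norm_minus_commute)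
  then show ?thesis using assms(5)[OF a(1)] by (simp add: inner_diff_left)
qed

lemma thickening_coordinate_anchors:
  fixes A :: "'a::euclidean_space set"
  assumes "compact A" "A \<noteq> {}" "0 < r"
  defines "X \<equiv> {x. infdist x A \<le> r}"
  shows "\<exists>lo. \<forall>i. lo i \<in> X \<and> lo i + r *\<^sub>R padded_basis i \<in> X \<and>
           (\<forall>x\<in>X. lo i \<bullet> padded_basis i \<le> x \<bullet> padded_basis i)"
proof -
  have "\<exists>z\<in>A. \<forall>y\<in>A. z \<bullet> padded_basis i \<le> y \<bullet> padded_basis i" for i :: nat
    using assms(1,2) by (intro continuous_attains_inf continuous_intros)
  then obtain z where z: "\<And>i. z i \<in> A" "\<And>i y. y \<in> A \<Longrightarrow> z i \<bullet> padded_basis i \<le> y \<bullet> padded_basis i"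
    by metis
  have unit: "norm (padded_basis i :: 'a) = 1" "padded_basis i \<bullet> (padded_basis i :: 'a) = 1" for i
    by (simp_all add: padded_basis_in_Basis inner_Basis)
  have "z i - r *\<^sub>R padded_basis i \<in> X" for i
    using unit(1)[of i] assms(3) by (auto simp: X_def dist_norm intro!: infdist_le2[OF z(1)[of i]])
  moreover have "z i \<in> X" for i
    using z(1) assms(3) by (simp add: X_def)
  moreover have "z i \<bullet> padded_basis i - r \<le> x \<bullet> padded_basis i" if "x \<in> X" for i x
    using that thickening_inner_lower_bound[OF compact_imp_closed[OF assms(1)] assms(2) _ unit(1) z(2)]
    by (simp add: X_def)
  ultimately show ?thesis
    by (intro exI[of _ "\<lambda>i. z i - r *\<^sub>R padded_basis i"]) (auto simp: inner_diff_left unit)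
qed

theorem theorem5:
  fixes X' :: "'a::euclidean_space set" and eI :: real and L :: nat and N :: "nat \<Rightarrow> nat"
    and f :: "'a \<Rightarrow> 'b::euclidean_space" and e :: real
  assumes "compact X'" and "X' \<noteq> {}" and "reach X' > 0"
    and "0 < eI" and "ereal eI < reach X'" and "eI < 1"
    and "L \<ge> 1" and "\<forall>l\<in>{1..L-1}. N l \<ge> DIM('a)"
    and "continuous_on {x. infdist x X' \<le> eI} f" and "e > 0"
  shows "\<exists>NL>0. \<exists>W b c b0.
           is_sampled {x. infdist x X' \<le> eI} L (N(0 := DIM('a), L := NL)) W b \<and>
           (\<forall>x\<in>{x. infdist x X' \<le> eI}.
              norm (net_out (N(0 := DIM('a), L := NL)) W b L c b0 x - f x) < e)"
proof -
  obtain lo where lo: "\<And>i. lo i \<in> {x. infdist x X' \<le> eI}"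
    "\<And>i. lo i + eI *\<^sub>R padded_basis i \<in> {x. infdist x X' \<le> eI}"
    "\<And>i x. x \<in> {x. infdist x X' \<le> eI} \<Longrightarrow> lo i \<bullet> padded_basis i \<le> x \<bullet> padded_basis i"
    using thickening_coordinate_anchors[OF assms(1,2,4)] by blast
  obtain L0 where L: "L = Suc L0" using assms(7) by (cases L) auto
  have widths: "DIM('a) \<le> (N(0 := DIM('a))) l" if "l < L" for l
    using assms(8) that by (cases "l = 0") auto
  show ?thesis
    using sampled_networks_dense[where N = "N(0 := DIM('a))",
        OF compact_infdist_le[OF assms(2,1,4)]
        thickening_subset_closure_interior[OF compact_imp_closed[OF assms(1)] assms(2,4)]
        assms(4) lo L widths fun_upd_same assms(9,10)] .
qed

end
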